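(* For any $\theta\in(0,1)$ there exist $\delta^*>0$ and a nonnegative $2\pi$-periodic function $W_\theta\in W^{1,\infty}$ with $W_\theta(x)=O(|x|^3)$ as $x\to0$ and $W_\theta(x)>0$ for $x\notin2\pi\mathbb Z$, such that the following holds. Let $x_0^*\in(-\delta^*,\delta^* )$, let $x^*(t)=2\arctan\big(e^{-t}\tan(x_0^*/2)\big)$, $\Omega^*(t)=[-\pi-x^*(t),\pi-x^*(t)]$, $\Omega^*_0=\Omega^*(0)$, and let $\varepsilon_0\in C^3(\Omega_0^* )$ with $\varepsilon_0(x)=O(|x|^3)$ as $x\to0$. Then the unique global solution $\varepsilon(t)=e^{tL}\varepsilon_0$ of $$\partial_t\varepsilon=L(\varepsilon)\ \text{ on }\Omega^*(t),\qquad \varepsilon(0)=\varepsilon_0\text{ on }\Omega^*_0,\qquad L(\varepsilon)=2\cos(x)\varepsilon-\sin(x)\partial_x\varepsilon+\sin(x)\int_0^x\varepsilon(t,\bar x)\,d\bar x,$$ satisfies for all $t\ge0$ $$\Big\|\frac{e^{tL}\varepsilon_0}{W_\theta}\Big\|_{L^\infty(\Omega^*(t))}\le e^{-(1-\theta)t}\Big\|\frac{\varepsilon_0}{W_\theta}\Big\|_{L^\infty(\Omega^*_0)}.$$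
   Context: $\Omega^*(t)$ is the image of $\Omega_0^*$ under the flow $\dot X=\sin X$, i.e. its endpoints $\pm\pi-x^*(t)$ solve this ODE. *)

theory Defs
  imports "HOL-Analysis.Analysis" "HOL-Library.Landau_Symbols"
begin

text \<open>Three times continuously differentiable on a set S (one-sided derivatives at the
  endpoints of a closed interval, via derivatives within S).\<close>
definition C3_on :: "real set \<Rightarrow> (real \<Rightarrow> real) \<Rightarrow> bool" where
  "C3_on S f \<longleftrightarrow> (\<exists>f1 f2 f3. continuous_on S f3 \<and>
     (\<forall>x\<in>S. (f has_real_derivative f1 x) (at x within S) \<and>
             (f1 has_real_derivative f2 x) (at x within S) \<and>
             (f2 has_real_derivative f3 x) (at x within S)))"

text \<open>W^{1,infinity}(R): bounded and Lipschitz.\<close>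
definition W1inf :: "(real \<Rightarrow> real) \<Rightarrow> bool" where
  "W1inf f \<longleftrightarrow> bounded (range f) \<and> (\<exists>C. C-lipschitz_on UNIV f)"

definition xstar :: "real \<Rightarrow> real \<Rightarrow> real" where
  "xstar x0 t = 2 * arctan (exp (- t) * tan (x0 / 2))"

definition Omega :: "real \<Rightarrow> real \<Rightarrow> real set" where
  "Omega x0 t = {- pi - xstar x0 t .. pi - xstar x0 t}"

text \<open>Weighted sup norm || f / W ||_{L^infinity(S)} as an extended real
  (infinite if the quotient is unbounded; at zeros of W the quotient is 0 by
  Isabelle's convention x/0 = 0).\<close>
definition wnorm :: "(real \<Rightarrow> real) \<Rightarrow> (real \<Rightarrow> real) \<Rightarrow> real set \<Rightarrow> ereal" where
  "wnorm f W S = (SUP x\<in>S. ereal \<bar>f x / W x\<bar>)"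

text \<open>The operator L applied to u at time t, point x, given u_x(x) = ux.\<close>
definition Lop :: "(real \<Rightarrow> real) \<Rightarrow> real \<Rightarrow> real \<Rightarrow> real" where
  "Lop u ux x = 2 * cos x * u x - sin x * ux + sin x * (LBINT y=0..x. u y)"

end

theory Submission
  imports Defs
begin

text \<open>The weight is \<open>weight x = sin (x/2)^4\<close>. On \<open>[-pi, pi]\<close>, and a little beyond, it
  satisfies \<open>Lop weight \<le> - weight\<close>: the local part of \<open>Lop\<close> gives exactly \<open>-2 weight\<close>,
  and the nonlocal part is at most \<open>weight\<close> because \<open>tan (x/2)\<close> is increasing. Hence, for
  \<open>0 \<le> lam \<le> 1\<close>, the function
  \<open>(m + eta) exp (-lam t) weight x + eta exp (13 t) sec ((x + xstar x0 t)/2)\<close>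
  is a strict supersolution that is infinite on the boundary of the moving domain. A solution
  with \<open>\<bar>eps 0\<bar> \<le> m weight\<close> could first touch it only at an interior point, where the
  equation contradicts strict supersolvency (maximum principle). Letting \<open>eta \<rightarrow> 0\<close> gives
  \<open>\<bar>eps t x\<bar> \<le> m exp (-lam t) weight x\<close>, the claimed decay with \<open>lam = 1 - \<theta>\<close> and
  \<open>delta = 1/10\<close>.\<close>

section \<open>The weight\<close>

definition weight :: "real \<Rightarrow> real" where
  "weight x = ((1 - cos x) / 2)\<^sup>2"

definition dweight :: "real \<Rightarrow> real" where
  "dweight x = (1 - cos x) * sin x / 2"

lemma weight_has_real_derivative: "(weight has_real_derivative dweight x) (at x within S)"
  unfolding weight_def dweight_def
  by (auto intro!: derivative_eq_intros simp: field_simps power2_eq_square)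

lemma weight_nonneg: "0 \<le> weight x"
  by (simp add: weight_def)

lemma weight_le_one: "weight x \<le> 1"
proof -
  have "0 \<le> (1 - cos x) / 2" "(1 - cos x) / 2 \<le> 1"
    using cos_le_one[of x] cos_ge_minus_one[of x] by auto
  then show ?thesis
    unfolding weight_def by (simp add: power_le_one)
qed

lemma weight_minus: "weight (- x) = weight x"
  by (simp add: weight_def)

lemma weight_periodic: "weight (x + 2 * pi) = weight x"
  by (simp add: weight_def)

lemma weight_0 [simp]: "weight 0 = 0"
  by (simp add: weight_def)

lemma continuous_on_weight: "continuous_on S weight"
  unfolding weight_def by (intro continuous_intros) auto

lemma abs_dweight_le_one: "\<bar>dweight x\<bar> \<le> 1"
proof -
  have "\<bar>(1 - cos x) * sin x\<bar> \<le> 2 * 1"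
    unfolding abs_mult using cos_le_one[of x] cos_ge_minus_one[of x] abs_sin_le_one[of x]
    by (intro mult_mono) auto
  then show ?thesis
    unfolding dweight_def by simp
qed

lemma weight_pos:
  assumes "x \<notin> {2 * pi * of_int k | k. True}"
  shows "0 < weight x"
proof -
  have "cos x \<noteq> 1"
    using assms cos_one_2pi_int[of x] by (auto simp: mult.commute mult.left_commute)
  then show ?thesis
    using cos_le_one[of x] by (simp add: weight_def)
qed

lemma weight_eq_0_imp_eq_0:
  assumes "weight x = 0" "\<bar>x\<bar> < 2 * pi"
  shows "x = 0"
proof -
  obtain n :: int where n: "x = of_int n * 2 * pi"
    using assms(1) cos_one_2pi_int by (auto simp: weight_def)
  have "\<bar>of_int n\<bar> * (2 * pi) < 1 * (2 * pi)"
    using assms(2) by (simp add: n abs_mult)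
  then have "\<bar>of_int n\<bar> < (1::real)"
    by (simp only: mult_less_cancel_right) simp
  then have "n = 0"
    by (simp flip: of_int_abs)
  then show ?thesis
    by (simp add: n)
qed

lemma lipschitz_weight: "1-lipschitz_on UNIV weight"
proof (rule lipschitz_onI)
  fix x y :: real
  have "norm (weight x - weight y) \<le> 1 * norm (x - y)"
    by (rule field_differentiable_bound[OF convex_UNIV])
      (use weight_has_real_derivative abs_dweight_le_one in auto)
  then show "dist (weight x) (weight y) \<le> 1 * dist x y"
    by (simp add: dist_norm)
qed simp

lemma W1inf_weight: "W1inf weight"
  unfolding W1inf_def bounded_iff
  using weight_nonneg weight_le_one lipschitz_weight by (metis abs_of_nonneg rangeE real_norm_def)

lemma one_minus_cos_le: "1 - cos (x::real) \<le> x\<^sup>2 / 2"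
proof -
  have "sin (x / 2) ^ 2 \<le> (x / 2) ^ 2"
    using abs_sin_x_le_abs_x[of "x / 2"] by (metis abs_ge_zero power2_abs power_mono)
  then show ?thesis
    using cos_double_sin[of "x / 2"] by (simp add: power_divide)
qed

lemma weight_bigo: "weight \<in> O[at 0](\<lambda>x. \<bar>x\<bar> ^ 3)"
proof (rule bigoI[where c = 1])
  have "eventually (\<lambda>x::real. \<bar>x\<bar> < 1) (at 0)"
    using eventually_at_ball[of 1 "0::real" UNIV] by (auto simp: dist_real_def elim: eventually_mono)
  then show "eventually (\<lambda>x. norm (weight x) \<le> 1 * norm (\<bar>x\<bar> ^ 3)) (at 0)"
  proof (rule eventually_mono)
    fix x :: real
    assume x: "\<bar>x\<bar> < 1"
    have "0 \<le> (1 - cos x) / 2" "(1 - cos x) / 2 \<le> x\<^sup>2 / 4"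
      using one_minus_cos_le[of x] cos_le_one[of x] by auto
    then have "weight x \<le> (x\<^sup>2 / 4)\<^sup>2"
      unfolding weight_def by (intro power_mono)
    also have "\<dots> = \<bar>x\<bar> ^ 3 * (\<bar>x\<bar> / 16)"
      by (simp add: power2_eq_square power3_eq_cube field_simps)
    also have "\<dots> \<le> \<bar>x\<bar> ^ 3 * 1"
      using x by (intro mult_left_mono) auto
    finally show "norm (weight x) \<le> 1 * norm (\<bar>x\<bar> ^ 3)"
      using weight_nonneg[of x] by simp
  qed
qed

text \<open>Monotonicity of \<open>tan (x/2) = (1 - cos x) / sin x\<close> on \<open>[0, pi]\<close>, without division.\<close>
lemma one_minus_cos_mul_sin_le:
  assumes "0 \<le> u" "u \<le> x" "x \<le> pi"
  shows "(1 - cos u) * sin x \<le> (1 - cos x) * sin u"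
proof -
  have "sin u * cos (x - u) + cos u * sin (x - u) = sin x"
    using sin_add[of u "x - u"] by simp
  moreover have "sin x * cos u - cos x * sin u = sin (x - u)"
    using sin_diff[of x u] by simp
  ultimately have "(1 - cos x) * sin u - (1 - cos u) * sin x
      = sin u * (1 - cos (x - u)) + sin (x - u) * (1 - cos u)"
    by (simp add: algebra_simps)
  moreover have "0 \<le> sin u" "0 \<le> sin (x - u)"
    using assms by (auto intro!: sin_ge_zero)
  ultimately show ?thesis
    using cos_le_one[of "x - u"] cos_le_one[of u] by (smt (verit) mult_nonneg_nonneg)
qed

lemma sin_mul_integral_weight_le:
  assumes "0 \<le> x" "x \<le> pi"
  shows "sin x * integral {0..x} weight \<le> (1 - cos x) / 2 * weight x"
proof -
  have "((\<lambda>u. (1 - cos x) / 2 * dweight u) has_integral (1 - cos x) / 2 * weight x) {0..x}"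
    using fundamental_theorem_of_calculus[OF assms(1) weight_has_real_derivative
        [unfolded has_real_derivative_iff_has_vector_derivative]]
    by (intro has_integral_mult_right) simp
  moreover have "sin x * weight u \<le> (1 - cos x) / 2 * dweight u" if "u \<in> {0..x}" for u
  proof -
    have "(1 - cos u) * ((1 - cos u) * sin x) \<le> (1 - cos u) * ((1 - cos x) * sin u)"
      using that assms cos_le_one[of u] by (intro mult_left_mono one_minus_cos_mul_sin_le) auto
    then show ?thesis
      unfolding weight_def dweight_def by (simp add: power2_eq_square field_simps)
  qed
  ultimately have "integral {0..x} (\<lambda>u. sin x * weight u) \<le> (1 - cos x) / 2 * weight x"
    by (intro has_integral_le[OF integrable_integral]
        integrable_continuous_real continuous_intros continuous_on_weight) auto
  then show ?thesis
    by simp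
qed

lemma abs_sin_mul_integral_weight_le_nonneg:
  assumes "0 \<le> x" "x < pi + 1/10"
  shows "\<bar>sin x\<bar> * integral {0..x} weight \<le> weight x"
proof (cases "x \<le> pi")
  case True
  then have "\<bar>sin x\<bar> * integral {0..x} weight \<le> (1 - cos x) / 2 * weight x"
    using sin_mul_integral_weight_le[OF assms(1)] sin_ge_zero[of x] assms by simp
  also have "\<dots> \<le> 1 * weight x"
    using cos_ge_minus_one[of x] weight_nonneg[of x] by (intro mult_right_mono) auto
  finally show ?thesis
    by simp
next
  case False
  define h where "h = x - pi"
  have h: "0 < h" "h < 1/10"
    using False assms by (auto simp: h_def)
  have "\<bar>sin x\<bar> \<le> 1/10"
    using abs_sin_x_le_abs_x[of h] h by (simp add: h_def sin_diff)
  moreover have "integral {0..x} weight \<le> 5"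
  proof -
    have "integral {0..x} weight \<le> integral {0..x} (\<lambda>_. 1::real)"
      by (intro integral_le integrable_continuous_real continuous_on_weight continuous_intros)
        (auto simp: weight_le_one)
    then show ?thesis
      using assms pi_less_4 by simp
  qed
  moreover have "0 \<le> integral {0..x} weight"
    by (intro integral_nonneg integrable_continuous_real continuous_on_weight)
      (auto simp: weight_nonneg)
  ultimately have "\<bar>sin x\<bar> * integral {0..x} weight \<le> 1/10 * 5"
    by (intro mult_mono) auto
  moreover have "h * h \<le> 1/10 * (1/10)"
    using h by (intro mult_mono) auto
  then have "h\<^sup>2 / 2 \<le> 1/100"
    by (simp add: power2_eq_square)
  then have "99/100 \<le> (1 - cos x) / 2"
    using one_minus_cos_le[of h] by (simp add: h_def cos_diff)
  then have "(99/100)\<^sup>2 \<le> weight x"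
    unfolding weight_def by (intro power_mono) auto
  ultimately show ?thesis
    by (simp add: power2_eq_square)
qed

text \<open>The bound extends slightly beyond \<open>pi\<close> because the moving domain \<open>Omega x0 t\<close>
  is the interval \<open>[-pi, pi]\<close> shifted by \<open>\<bar>xstar x0 t\<bar> < 1/10\<close>.\<close>
lemma abs_sin_mul_integral_weight_le:
  assumes "\<bar>x\<bar> < pi + 1/10"
  shows "\<bar>sin x\<bar> * integral {min 0 x..max 0 x} weight \<le> weight x"
proof (cases "0 \<le> x")
  case True
  then show ?thesis
    using abs_sin_mul_integral_weight_le_nonneg[of x] assms by simp
next
  case False
  have "integral {x..0} weight = integral {0..-x} weight"
    using Henstock_Kurzweil_Integration.integral_reflect_real[of "-x" 0 weight] by (simp add: weight_minus)
  then show ?thesis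
    using abs_sin_mul_integral_weight_le_nonneg[of "-x"] assms False by (simp add: weight_minus)
qed

lemma weight_supersolution:
  assumes "\<bar>x\<bar> < pi + 1/10"
  shows "2 * cos x * weight x - sin x * dweight x + \<bar>sin x\<bar> * integral {min 0 x..max 0 x} weight
    \<le> - weight x"
proof -
  have "sin x * dweight x = (1 - cos x) * (1 - (cos x)\<^sup>2) / 2"
    unfolding dweight_def sin_squared_eq[symmetric] by (simp add: power2_eq_square)
  then have "2 * cos x * weight x - sin x * dweight x = - 2 * weight x"
    unfolding weight_def by (simp add: power2_eq_square field_simps)
  then show ?thesis
    using abs_sin_mul_integral_weight_le[OF assms] by linarith
qed

lemma abs_interval_integral_le:
  fixes f g :: "real \<Rightarrow> real"
  assumes "continuous_on {min 0 x..max 0 x} f" "continuous_on {min 0 x..max 0 x} g"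
    and "\<And>u. u \<in> {min 0 x..max 0 x} \<Longrightarrow> \<bar>f u\<bar> \<le> g u"
  shows "\<bar>LBINT u=0..x. f u\<bar> \<le> integral {min 0 x..max 0 x} g"
proof -
  have "\<bar>LBINT u=0..x. f u\<bar> = \<bar>LBINT u=min 0 x..max 0 x. f u\<bar>"
    using interval_integral_endpoints_reverse[of 0 x f]
    by (cases "0 \<le> x") (simp_all add: min_def max_def zero_ereal_def)
  also have "\<dots> = \<bar>integral {min 0 x..max 0 x} f\<bar>"
    by (subst interval_integral_eq_integral) (auto intro: borel_integrable_atLeastAtMost' assms)
  also have "\<dots> \<le> integral {min 0 x..max 0 x} g"
    using assms by (intro integral_norm_bound_integral[where 'a = real, simplified]
        integrable_continuous_real) auto
  finally show ?thesis .
qed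

section \<open>The boundary term and the centre trajectory\<close>

definition sec_half :: "real \<Rightarrow> real" where
  "sec_half y = 1 / cos (y / 2)"

definition dsec_half :: "real \<Rightarrow> real" where
  "dsec_half y = sin (y / 2) / (2 * (cos (y / 2))\<^sup>2)"

lemma cos_half_pos: "\<bar>y\<bar> < pi \<Longrightarrow> 0 < cos (y / 2)"
  by (intro cos_gt_zero_pi) auto

lemma sec_half_has_real_derivative:
  "\<bar>y\<bar> < pi \<Longrightarrow> (sec_half has_real_derivative dsec_half y) (at y within S)"
  using cos_half_pos[of y] unfolding sec_half_def dsec_half_def
  by (auto intro!: derivative_eq_intros simp: power2_eq_square field_simps)

lemma sec_half_ge_one: "\<bar>y\<bar> < pi \<Longrightarrow> 1 \<le> sec_half y"
  using cos_half_pos[of y] cos_le_one[of "y / 2"] by (simp add: sec_half_def le_divide_eq)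

lemma sec_half_mono:
  assumes "\<bar>u\<bar> \<le> \<bar>y\<bar>" "\<bar>y\<bar> < pi"
  shows "sec_half u \<le> sec_half y"
proof -
  have "cos (\<bar>y\<bar> / 2) \<le> cos (\<bar>u\<bar> / 2)"
    using assms by (intro cos_monotone_0_pi_le) auto
  then show ?thesis
    using cos_half_pos[OF assms(2)] cos_abs_real[of "y / 2"] cos_abs_real[of "u / 2"]
    by (simp add: sec_half_def frac_le)
qed

lemma sec_half_le_two:
  assumes "\<bar>y\<bar> \<le> 1/10"
  shows "sec_half y \<le> 2"
proof -
  have "\<bar>y / 2\<bar>\<^sup>2 \<le> (1/20)\<^sup>2"
    using assms by (intro power_mono) auto
  then have "1 - cos (y / 2) \<le> 1/2"
    using one_minus_cos_le[of "y / 2"] by (simp add: power2_eq_square)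
  then show ?thesis
    unfolding sec_half_def by (simp add: divide_le_eq)
qed

lemma sec_half_le_on_segment:
  assumes "\<bar>s\<bar> \<le> 1/10" "\<bar>x + s\<bar> < pi" "u \<in> {min 0 x..max 0 x}"
  shows "\<bar>u + s\<bar> < pi" and "sec_half (u + s) \<le> 2 * sec_half (x + s)"
proof -
  have "\<bar>u + s\<bar> \<le> max \<bar>s\<bar> \<bar>x + s\<bar>"
    using assms(3) by (auto simp: min_def max_def split: if_splits)
  then have u: "\<bar>u + s\<bar> \<le> \<bar>x + s\<bar> \<or> \<bar>u + s\<bar> \<le> 1/10"
    using assms(1) by linarith
  then show "\<bar>u + s\<bar> < pi"
    using assms(2) pi_gt3 by linarith
  show "sec_half (u + s) \<le> 2 * sec_half (x + s)"
    using u sec_half_mono[OF _ assms(2)] sec_half_le_two sec_half_ge_one[OF assms(2)]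
    by fastforce
qed

lemma sec_half_supersolution:
  assumes "\<bar>s\<bar> \<le> 1/10" "\<bar>y\<bar> < pi"
  defines "x \<equiv> y - s"
  shows "2 * cos x * sec_half y - sin x * dsec_half y + \<bar>sin x\<bar> * (2 * \<bar>x\<bar> * sec_half y)
    < 13 * sec_half y - dsec_half y * sin s"
proof -
  define c where "c = cos (y / 2)"
  define d where "d = sin (y / 2)"
  have c: "0 < c"
    using cos_half_pos[OF assms(2)] by (simp add: c_def)
  have "sin y = 2 * d * c" "cos y = c\<^sup>2 - d\<^sup>2" "d\<^sup>2 + c\<^sup>2 = 1"
    using sin_double[of "y / 2"] cos_double[of "y / 2"] by (simp_all add: c_def d_def)
  then have "sin x - sin s = 2 * d * c * cos s - (c\<^sup>2 - d\<^sup>2) * sin s - (d\<^sup>2 + c\<^sup>2) * sin s"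
    by (simp add: x_def sin_diff)
  also have "\<dots> = 2 * c * (d * cos s - c * sin s)"
    by (simp add: algebra_simps power2_eq_square)
  finally have "dsec_half y * (sin x - sin s) = d / (2 * c\<^sup>2) * (2 * c * (d * cos s - c * sin s))"
    by (simp add: dsec_half_def c_def d_def)
  also have "\<dots> = d\<^sup>2 * cos s / c - d * sin s"
    using c by (simp add: field_simps power2_eq_square)
  finally have "dsec_half y * (sin x - sin s) = d\<^sup>2 * cos s / c - d * sin s" .
  moreover have "0 \<le> d\<^sup>2 * cos s / c"
    using c assms(1) pi_gt3 by (intro divide_nonneg_pos mult_nonneg_nonneg cos_ge_zero) auto
  moreover have "\<bar>d * sin s\<bar> \<le> 1 * 1"
    unfolding abs_mult d_def by (intro mult_mono) auto
  ultimately have "- (sin x * dsec_half y) \<le> 1 - dsec_half y * sin s"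
    by (simp add: right_diff_distrib mult.commute)
  moreover have "2 * cos x * sec_half y \<le> 2 * sec_half y"
    using sec_half_ge_one[OF assms(2)] cos_le_one[of x] by simp
  moreover have "\<bar>x\<bar> \<le> 4.1"
    using assms(1,2) pi_less_4 unfolding x_def by arith
  then have "\<bar>sin x\<bar> * (2 * \<bar>x\<bar> * sec_half y) \<le> 1 * (2 * 4.1 * sec_half y)"
    using sec_half_ge_one[OF assms(2)] abs_sin_le_one[of x] by (intro mult_mono) auto
  ultimately show ?thesis
    using sec_half_ge_one[OF assms(2)] by linarith
qed

lemma sin_double_arctan: "sin (2 * arctan z) = 2 * z / (1 + z\<^sup>2)"
proof -
  have "sqrt (1 + z\<^sup>2) * sqrt (1 + z\<^sup>2) = 1 + z\<^sup>2"
    by (simp add: add_pos_nonneg)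
  then show ?thesis
    by (simp add: sin_double sin_arctan cos_arctan)
qed

lemma xstar_has_real_derivative:
  "(xstar x0 has_real_derivative - sin (xstar x0 t)) (at t within S)"
proof -
  let ?z = "exp (- t) * tan (x0 / 2)"
  have "(xstar x0 has_real_derivative 2 * (inverse (1 + ?z\<^sup>2) * (- ?z))) (at t within S)"
    unfolding xstar_def[abs_def] by (auto intro!: derivative_eq_intros simp: power2_eq_square)
  moreover have "2 * (inverse (1 + ?z\<^sup>2) * (- ?z)) = - sin (xstar x0 t)"
    unfolding xstar_def sin_double_arctan by (simp add: field_simps)
  ultimately show ?thesis
    by simp
qed

lemma continuous_on_xstar: "continuous_on S (xstar x0)"
  using xstar_has_real_derivative by (meson DERIV_continuous continuous_at_imp_continuous_on)

lemma xstar_0: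
  assumes "\<bar>x0\<bar> < pi"
  shows "xstar x0 0 = x0"
proof -
  have "arctan (tan (x0 / 2)) = x0 / 2"
    using assms by (intro arctan_tan) auto
  then show ?thesis
    by (simp add: xstar_def)
qed

lemma abs_xstar_le:
  assumes "\<bar>x0\<bar> < pi" "0 \<le> t"
  shows "\<bar>xstar x0 t\<bar> \<le> \<bar>x0\<bar>"
proof -
  have "\<bar>exp (- t) * tan (x0 / 2)\<bar> \<le> \<bar>tan (x0 / 2)\<bar>"
    using assms by (simp add: abs_mult mult_left_le_one_le)
  then have "arctan \<bar>exp (- t) * tan (x0 / 2)\<bar> \<le> arctan \<bar>tan (x0 / 2)\<bar>"
    by (simp add: arctan_le_iff)
  moreover have "\<bar>arctan z\<bar> = arctan \<bar>z\<bar>" for z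
    by (cases "0 \<le> z") (auto simp: arctan_minus arctan_le_zero_iff)
  moreover have "arctan (tan (x0 / 2)) = x0 / 2"
    using assms by (intro arctan_tan) auto
  ultimately have "\<bar>arctan (exp (- t) * tan (x0 / 2))\<bar> \<le> \<bar>x0 / 2\<bar>"
    by metis
  then show ?thesis
    by (simp add: xstar_def)
qed

lemma mem_Omega_iff: "x \<in> Omega x0 t \<longleftrightarrow> \<bar>x + xstar x0 t\<bar> \<le> pi"
  unfolding Omega_def by auto

lemma mem_interior_Omega_iff: "x \<in> interior (Omega x0 t) \<longleftrightarrow> \<bar>x + xstar x0 t\<bar> < pi"
  unfolding Omega_def interior_atLeastAtMost_real by auto

section \<open>The barrier\<close>

text \<open>The rate \<open>13\<close> dominates what \<open>Lop\<close> produces from the boundary term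
  (\<open>sec_half_supersolution\<close>).\<close>
definition barrier :: "real \<Rightarrow> real \<Rightarrow> real \<Rightarrow> real \<Rightarrow> real \<Rightarrow> real \<Rightarrow> real" where
  "barrier x0 lam a eta t x =
     a * exp (- lam * t) * weight x + eta * exp (13 * t) * sec_half (x + xstar x0 t)"

lemma barrier_time_derivative:
  assumes "\<bar>x + xstar x0 t\<bar> < pi"
  shows "((\<lambda>s. barrier x0 lam a eta s x) has_real_derivative
     - lam * (a * exp (- lam * t)) * weight x + eta * exp (13 * t) *
       (13 * sec_half (x + xstar x0 t) - dsec_half (x + xstar x0 t) * sin (xstar x0 t))) (at t)"
proof -
  have "((\<lambda>s. sec_half (x + xstar x0 s)) has_real_derivative
      dsec_half (x + xstar x0 t) * (0 + - sin (xstar x0 t))) (at t)"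
    by (intro DERIV_chain2[where g = "\<lambda>s. x + xstar x0 s", OF
          sec_half_has_real_derivative[OF assms]] derivative_intros xstar_has_real_derivative)
  then show ?thesis
    unfolding barrier_def by (auto intro!: derivative_eq_intros simp: algebra_simps)
qed

lemma barrier_space_derivative:
  assumes "\<bar>x + xstar x0 t\<bar> < pi"
  shows "(barrier x0 lam a eta t has_real_derivative
     a * exp (- lam * t) * dweight x + eta * exp (13 * t) * dsec_half (x + xstar x0 t)) (at x)"
proof -
  have "((\<lambda>x. sec_half (x + xstar x0 t)) has_real_derivative
      dsec_half (x + xstar x0 t) * (1 + 0)) (at x)"
    by (intro DERIV_chain2[where g = "\<lambda>x. x + xstar x0 t", OF
          sec_half_has_real_derivative[OF assms]] derivative_intros)
  then show ?thesis
    unfolding barrier_def[abs_def]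
    by (auto intro!: derivative_eq_intros weight_has_real_derivative)
qed

lemma barrier_supersolution:
  assumes "\<bar>xstar x0 t\<bar> \<le> 1/10" "\<bar>x + xstar x0 t\<bar> < pi"
    and "0 \<le> lam" "lam \<le> 1" "0 \<le> a" "0 < eta"
  defines "y \<equiv> x + xstar x0 t" and "A \<equiv> a * exp (- lam * t)" and "B \<equiv> eta * exp (13 * t)"
  shows "2 * cos x * barrier x0 lam a eta t x - sin x * (A * dweight x + B * dsec_half y)
      + \<bar>sin x\<bar> * integral {min 0 x..max 0 x} (\<lambda>u. A * weight u + B * (2 * sec_half y))
    < - lam * A * weight x + B * (13 * sec_half y - dsec_half y * sin (xstar x0 t))"
proof -
  have A: "0 \<le> A" and B: "0 < B"
    using assms(5,6) by (simp_all add: A_def B_def)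
  have "integral {min 0 x..max 0 x} (\<lambda>u. A * weight u + B * (2 * sec_half y))
      = A * integral {min 0 x..max 0 x} weight + B * (2 * \<bar>x\<bar> * sec_half y)"
    by (subst integral_add) (auto intro!: integrable_continuous_real continuous_intros
        continuous_on_weight simp: min_def max_def)
  moreover have "lam * weight x \<le> weight x"
    using assms(3,4) weight_nonneg[of x] by (simp add: mult_left_le_one_le)
  then have "A * (2 * cos x * weight x - sin x * dweight x
        + \<bar>sin x\<bar> * integral {min 0 x..max 0 x} weight) \<le> A * (- lam * weight x)"
    using A assms(1,2) weight_supersolution[of x] by (intro mult_left_mono) (auto, arith)
  moreover have "B * (2 * cos x * sec_half y - sin x * dsec_half y
        + \<bar>sin x\<bar> * (2 * \<bar>x\<bar> * sec_half y))
      < B * (13 * sec_half y - dsec_half y * sin (xstar x0 t))"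
    using B sec_half_supersolution[OF assms(1,2)] by (simp add: y_def)
  ultimately show ?thesis
    by (simp add: barrier_def A_def B_def y_def algebra_simps)
qed

section \<open>Comparison with the barrier\<close>

lemma DERIV_le_of_contact_from_left:
  fixes f g :: "real \<Rightarrow> real"
  assumes f: "(f has_real_derivative f') (at t)" and g: "(g has_real_derivative g') (at t)"
    and below: "\<forall>\<^sub>F s in at_left t. f s \<le> g s" and contact: "f t = g t"
  shows "g' \<le> f'"
proof (rule ccontr)
  assume "\<not> g' \<le> f'"
  then obtain d where "0 < d" and d: "\<And>h. 0 < h \<Longrightarrow> h < d \<Longrightarrow> f t - g t < f (t - h) - g (t - h)"
    using DERIV_neg_dec_left[OF DERIV_diff[OF f g]] by auto
  have "\<forall>\<^sub>F s in at_left t. s \<in> {t - d<..<t}"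
    using \<open>0 < d\<close> by (intro eventually_at_left_real) simp
  with below have "\<forall>\<^sub>F s in at_left t. False"
  proof eventually_elim
    case (elim s)
    then show False
      using d[of "t - s"] contact by auto
  qed
  then show False
    by simp
qed

lemma compact_obtains_earliest:
  fixes K :: "(real \<times> 'a::topological_space) set"
  assumes "compact K" "p \<in> K"
  obtains t y where "(t, y) \<in> K" "\<And>s z. (s, z) \<in> K \<Longrightarrow> t \<le> s"
proof -
  have "compact (fst ` K)"
    using assms(1) by (intro compact_continuous_image continuous_intros)
  then obtain t where "t \<in> fst ` K" "\<forall>s \<in> fst ` K. t \<le> s"
    using compact_attains_inf assms(2) by blast
  then show thesis
    using that by force
qed

locale linearized_solution =
  fixes x0 :: real and eps :: "real \<Rightarrow> real \<Rightarrow> real"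
  assumes x0_small: "\<bar>x0\<bar> < 1/10"
    and continuous: "continuous_on {(t, x). 0 \<le> t \<and> x \<in> Omega x0 t} (\<lambda>(t, x). eps t x)"
    and pde: "\<And>t x. 0 < t \<Longrightarrow> x \<in> interior (Omega x0 t) \<Longrightarrow>
      \<exists>et ex. ((\<lambda>s. eps s x) has_real_derivative et) (at t) \<and>
        ((\<lambda>y. eps t y) has_real_derivative ex) (at x) \<and> et = Lop (eps t) ex x"
begin

lemma abs_xstar_le_tenth: "0 \<le> t \<Longrightarrow> \<bar>xstar x0 t\<bar> \<le> 1/10"
  using abs_xstar_le[of x0 t] x0_small pi_gt3 by linarith

lemma continuous_on_slice: "0 \<le> t \<Longrightarrow> continuous_on (Omega x0 t) (eps t)"
  using continuous_on_compose2[OF continuous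
      continuous_on_Pair[OF continuous_on_const continuous_on_id]] by auto

lemma solution_uminus: "linearized_solution x0 (\<lambda>t x. - eps t x)"
proof
  show "\<bar>x0\<bar> < 1/10"
    by (fact x0_small)
  show "continuous_on {(t, x). 0 \<le> t \<and> x \<in> Omega x0 t} (\<lambda>(t, x). - eps t x)"
    using continuous_on_minus[OF continuous] by (simp add: case_prod_beta')
  fix t x
  assume "0 < t" "x \<in> interior (Omega x0 t)"
  then obtain et ex where "((\<lambda>s. eps s x) has_real_derivative et) (at t)"
      "((\<lambda>y. eps t y) has_real_derivative ex) (at x)" and L: "et = Lop (eps t) ex x"
    using pde by blast
  moreover have "- et = Lop (\<lambda>y. - eps t y) (- ex) x"
    by (simp add: L Lop_def interval_lebesgue_integral_uminus)
  ultimately show "\<exists>et ex. ((\<lambda>s. - eps s x) has_real_derivative et) (at t) \<and>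
      ((\<lambda>y. - eps t y) has_real_derivative ex) (at x) \<and> et = Lop (\<lambda>y. - eps t y) ex x"
    by (metis DERIV_minus)
qed

text \<open>In the coordinate \<open>y = x + xstar x0 t\<close> the domain is \<open>[-pi, pi]\<close>. This is
  \<open>cos (y/2)\<close> times the excess of \<open>\<bar>eps\<bar>\<close> over the barrier; unlike the excess itself it is
  continuous up to the boundary, where it is negative.\<close>
definition scaled_excess :: "real \<Rightarrow> real \<Rightarrow> real \<Rightarrow> real \<Rightarrow> real \<Rightarrow> real" where
  "scaled_excess lam a eta t y = cos (y / 2) * (\<bar>eps t (y - xstar x0 t)\<bar>
     - a * exp (- lam * t) * weight (y - xstar x0 t)) - eta * exp (13 * t)"

lemma scaled_excess_nonneg_iff:
  assumes "\<bar>y\<bar> < pi"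
  shows "0 \<le> scaled_excess lam a eta t y \<longleftrightarrow>
    barrier x0 lam a eta t (y - xstar x0 t) \<le> \<bar>eps t (y - xstar x0 t)\<bar>"
  using cos_half_pos[OF assms]
  by (simp add: scaled_excess_def barrier_def sec_half_def field_simps)

lemma scaled_excess_boundary:
  assumes "0 < eta" "\<bar>y\<bar> = pi"
  shows "scaled_excess lam a eta t y < 0"
proof -
  have "y = pi \<or> y = - pi"
    using assms(2) by arith
  then have "cos (y / 2) = 0"
    by auto
  then show ?thesis
    using assms(1) by (simp add: scaled_excess_def)
qed

lemma continuous_on_scaled_excess:
  "continuous_on ({0..T} \<times> {-pi..pi}) (\<lambda>(t, y). scaled_excess lam a eta t y)"
  unfolding scaled_excess_def case_prod_beta'
  by (intro continuous_intros continuous_on_compose2[OF continuous_on_xstar]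
      continuous_on_compose2[OF continuous_on_weight]
      continuous_on_compose2[OF continuous, where f = "\<lambda>p. (fst p, snd p - xstar x0 (fst p))",
        simplified]) (auto simp: mem_Omega_iff)

lemma first_contact:
  assumes "0 < eta" and t2: "0 \<le> t2" "\<bar>x2 + xstar x0 t2\<bar> < pi"
    and violated: "barrier x0 lam a eta t2 x2 \<le> \<bar>eps t2 x2\<bar>"
  obtains t1 x1 where "0 \<le> t1" "\<bar>x1 + xstar x0 t1\<bar> < pi"
    "barrier x0 lam a eta t1 x1 \<le> \<bar>eps t1 x1\<bar>"
    "\<And>t x. 0 \<le> t \<Longrightarrow> t < t1 \<Longrightarrow> \<bar>x + xstar x0 t\<bar> < pi \<Longrightarrow>
       \<bar>eps t x\<bar> < barrier x0 lam a eta t x"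
proof -
  define D where "D = {0..t2} \<times> {-pi..pi}"
  define K where "K = D \<inter> (\<lambda>(t, y). scaled_excess lam a eta t y) -` {0..}"
  have "closed K"
    unfolding K_def D_def
    by (intro continuous_closed_preimage continuous_on_scaled_excess closed_Times) auto
  then have "compact K"
    using compact_Int_closed[of D K] by (simp add: K_def D_def compact_Times)
  moreover have "(t2, x2 + xstar x0 t2) \<in> K"
    using t2 violated scaled_excess_nonneg_iff[of "x2 + xstar x0 t2"] by (auto simp: K_def D_def)
  ultimately obtain t1 y1 where y1: "(t1, y1) \<in> K" and earliest: "\<And>s z. (s, z) \<in> K \<Longrightarrow> t1 \<le> s"
    by (rule compact_obtains_earliest) blast
  then have "\<bar>y1\<bar> \<le> pi" "0 \<le> scaled_excess lam a eta t1 y1"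
    by (auto simp: K_def D_def)
  then have "\<bar>y1\<bar> < pi"
    using scaled_excess_boundary[OF \<open>0 < eta\<close>, of y1 lam a t1] by fastforce
  show thesis
  proof (rule that[of t1 "y1 - xstar x0 t1"])
    show "0 \<le> t1" "\<bar>y1 - xstar x0 t1 + xstar x0 t1\<bar> < pi"
      using y1 \<open>\<bar>y1\<bar> < pi\<close> by (auto simp: K_def D_def)
    show "barrier x0 lam a eta t1 (y1 - xstar x0 t1) \<le> \<bar>eps t1 (y1 - xstar x0 t1)\<bar>"
      using y1 scaled_excess_nonneg_iff[OF \<open>\<bar>y1\<bar> < pi\<close>] by (simp add: K_def)
    fix t x
    assume "0 \<le> t" "t < t1" "\<bar>x + xstar x0 t\<bar> < pi"
    moreover have "t1 \<le> t2"
      using y1 by (simp add: K_def D_def)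
    ultimately have "(t, x + xstar x0 t) \<in> D" "(t, x + xstar x0 t) \<notin> K"
      using earliest[of t "x + xstar x0 t"] by (auto simp: D_def)
    then have "\<not> 0 \<le> scaled_excess lam a eta t (x + xstar x0 t)"
      by (simp add: K_def)
    then show "\<bar>eps t x\<bar> < barrier x0 lam a eta t x"
      using scaled_excess_nonneg_iff[OF \<open>\<bar>x + xstar x0 t\<bar> < pi\<close>] by simp
  qed
qed

lemma abs_integral_le_of_below_barrier:
  assumes "0 < eta" "0 \<le> t1" and x1: "\<bar>x1 + xstar x0 t1\<bar> < pi"
    and below: "\<And>x. \<bar>x + xstar x0 t1\<bar> < pi \<Longrightarrow> \<bar>eps t1 x\<bar> \<le> barrier x0 lam a eta t1 x"
  defines "A \<equiv> a * exp (- lam * t1)" and "B \<equiv> eta * exp (13 * t1)"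
  shows "\<bar>LBINT u=0..x1. eps t1 u\<bar>
    \<le> integral {min 0 x1..max 0 x1} (\<lambda>u. A * weight u + B * (2 * sec_half (x1 + xstar x0 t1)))"
proof (rule abs_interval_integral_le)
  have "{min 0 x1..max 0 x1} \<subseteq> Omega x0 t1"
    using sec_half_le_on_segment(1)[OF abs_xstar_le_tenth[OF assms(2)] x1]
    by (force simp: mem_Omega_iff)
  then show "continuous_on {min 0 x1..max 0 x1} (eps t1)"
    using continuous_on_slice[OF assms(2)] by (rule continuous_on_subset[rotated])
  show "continuous_on {min 0 x1..max 0 x1}
      (\<lambda>u. A * weight u + B * (2 * sec_half (x1 + xstar x0 t1)))"
    by (intro continuous_intros continuous_on_weight)
  fix u
  assume u: "u \<in> {min 0 x1..max 0 x1}"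
  have "0 < B"
    using \<open>0 < eta\<close> by (simp add: B_def)
  then have "B * sec_half (u + xstar x0 t1) \<le> B * (2 * sec_half (x1 + xstar x0 t1))"
    using sec_half_le_on_segment(2)[OF abs_xstar_le_tenth[OF assms(2)] x1 u]
    by (intro mult_left_mono) auto
  then have "barrier x0 lam a eta t1 u \<le> A * weight u + B * (2 * sec_half (x1 + xstar x0 t1))"
    by (simp add: barrier_def A_def B_def)
  moreover have "\<bar>eps t1 u\<bar> \<le> barrier x0 lam a eta t1 u"
    using below sec_half_le_on_segment(1)[OF abs_xstar_le_tenth[OF assms(2)] x1 u] by simp
  ultimately show "\<bar>eps t1 u\<bar> \<le> A * weight u + B * (2 * sec_half (x1 + xstar x0 t1))"
    by linarith
qed

lemma barrier_not_touched_from_below: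
  assumes "0 \<le> lam" "lam \<le> 1" "0 \<le> a" "0 < eta" "0 < t1"
    and x1: "\<bar>x1 + xstar x0 t1\<bar> < pi"
    and below: "\<And>x. \<bar>x + xstar x0 t1\<bar> < pi \<Longrightarrow> \<bar>eps t1 x\<bar> \<le> barrier x0 lam a eta t1 x"
    and before: "\<forall>\<^sub>F s in at_left t1. eps s x1 \<le> barrier x0 lam a eta s x1"
  shows "eps t1 x1 < barrier x0 lam a eta t1 x1"
proof (rule ccontr)
  define y1 where "y1 = x1 + xstar x0 t1"
  define A where "A = a * exp (- lam * t1)"
  define B where "B = eta * exp (13 * t1)"
  define \<Phi>t where "\<Phi>t = - lam * A * weight x1 + B * (13 * sec_half y1 - dsec_half y1 * sin (xstar x0 t1))"
  define \<Phi>x where "\<Phi>x = A * dweight x1 + B * dsec_half y1"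
  define J where "J = integral {min 0 x1..max 0 x1} (\<lambda>u. A * weight u + B * (2 * sec_half y1))"
  assume "\<not> eps t1 x1 < barrier x0 lam a eta t1 x1"
  then have contact: "eps t1 x1 = barrier x0 lam a eta t1 x1"
    using below[OF x1] by linarith
  obtain et ex where et: "((\<lambda>s. eps s x1) has_real_derivative et) (at t1)"
    and ex: "(eps t1 has_real_derivative ex) (at x1)" and L: "et = Lop (eps t1) ex x1"
    using pde[OF \<open>0 < t1\<close>] x1 unfolding mem_interior_Omega_iff by blast
  have "ex - \<Phi>x = 0"
  proof (rule DERIV_local_max)
    show "((\<lambda>x. eps t1 x - barrier x0 lam a eta t1 x) has_real_derivative ex - \<Phi>x) (at x1)"
      unfolding \<Phi>x_def A_def B_def y1_def by (intro DERIV_diff ex barrier_space_derivative x1)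
    show "0 < pi - \<bar>y1\<bar>"
      using x1 by (simp add: y1_def)
    show "\<forall>x. \<bar>x1 - x\<bar> < pi - \<bar>y1\<bar> \<longrightarrow>
        eps t1 x - barrier x0 lam a eta t1 x \<le> eps t1 x1 - barrier x0 lam a eta t1 x1"
    proof (intro allI impI)
      fix x
      assume "\<bar>x1 - x\<bar> < pi - \<bar>y1\<bar>"
      then have "\<bar>x + xstar x0 t1\<bar> < pi"
        unfolding y1_def by linarith
      then show "eps t1 x - barrier x0 lam a eta t1 x \<le> eps t1 x1 - barrier x0 lam a eta t1 x1"
        using below[of x] contact by linarith
    qed
  qed
  moreover have "\<Phi>t \<le> et"
    using DERIV_le_of_contact_from_left[OF et barrier_time_derivative[OF x1] before contact]
    by (simp add: \<Phi>t_def A_def B_def y1_def)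
  moreover have "\<bar>LBINT u=0..x1. eps t1 u\<bar> \<le> J"
    unfolding J_def A_def B_def y1_def
    using abs_integral_le_of_below_barrier[OF \<open>0 < eta\<close> _ x1 below] \<open>0 < t1\<close> by simp
  then have "\<bar>sin x1 * (LBINT u=0..x1. eps t1 u)\<bar> \<le> \<bar>sin x1\<bar> * J"
    unfolding abs_mult by (intro mult_left_mono) auto
  then have "sin x1 * (LBINT u=0..x1. eps t1 u) \<le> \<bar>sin x1\<bar> * J"
    by linarith
  moreover have "2 * cos x1 * barrier x0 lam a eta t1 x1 - sin x1 * \<Phi>x + \<bar>sin x1\<bar> * J < \<Phi>t"
    using barrier_supersolution[OF abs_xstar_le_tenth x1 assms(1-4)] \<open>0 < t1\<close>
    by (simp add: \<Phi>t_def \<Phi>x_def J_def A_def B_def y1_def)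
  ultimately show False
    using L contact by (simp add: Lop_def)
qed

lemma below_barrier_until_first_contact:
  assumes "0 < t1" and x: "\<bar>x + xstar x0 t1\<bar> < pi"
    and earlier: "\<And>t x. 0 \<le> t \<Longrightarrow> t < t1 \<Longrightarrow> \<bar>x + xstar x0 t\<bar> < pi \<Longrightarrow>
      \<bar>eps t x\<bar> < barrier x0 lam a eta t x"
  shows "\<forall>\<^sub>F s in at_left t1. \<bar>eps s x\<bar> < barrier x0 lam a eta s x"
    and "\<bar>eps t1 x\<bar> \<le> barrier x0 lam a eta t1 x"
proof -
  have "isCont (\<lambda>s. \<bar>x + xstar x0 s\<bar>) t1"
    by (intro continuous_intros DERIV_isCont[OF xstar_has_real_derivative])
  then have "\<forall>\<^sub>F s in at t1. \<bar>x + xstar x0 s\<bar> < pi"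
    using x by (intro order_tendstoD(2)) (simp_all add: isCont_def)
  then have "\<forall>\<^sub>F s in at_left t1. \<bar>x + xstar x0 s\<bar> < pi"
    by (simp add: eventually_at_split)
  moreover have "\<forall>\<^sub>F s in at_left t1. s \<in> {0<..<t1}"
    using \<open>0 < t1\<close> by (rule eventually_at_left_real)
  ultimately show before: "\<forall>\<^sub>F s in at_left t1. \<bar>eps s x\<bar> < barrier x0 lam a eta s x"
    by eventually_elim (auto intro: earlier)
  show "\<bar>eps t1 x\<bar> \<le> barrier x0 lam a eta t1 x"
  proof (rule tendsto_le[OF trivial_limit_at_left_real])
    show "((\<lambda>s. barrier x0 lam a eta s x) \<longlongrightarrow> barrier x0 lam a eta t1 x) (at_left t1)"
      using DERIV_isCont[OF barrier_time_derivative[OF x]] by (simp add: isCont_def filterlim_at_split)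
    obtain et where "((\<lambda>s. eps s x) has_real_derivative et) (at t1)"
      using pde[OF \<open>0 < t1\<close>] x unfolding mem_interior_Omega_iff by blast
    then have "isCont (\<lambda>s. eps s x) t1"
      by (rule DERIV_isCont)
    then show "((\<lambda>s. \<bar>eps s x\<bar>) \<longlongrightarrow> \<bar>eps t1 x\<bar>) (at_left t1)"
      by (intro tendsto_rabs) (simp add: isCont_def filterlim_at_split)
    show "\<forall>\<^sub>F s in at_left t1. \<bar>eps s x\<bar> \<le> barrier x0 lam a eta s x"
      using before by eventually_elim simp
  qed
qed

text \<open>The sign of \<open>eps\<close> at a first contact is handled by applying
  \<open>barrier_not_touched_from_below\<close> to \<open>eps\<close> and to \<open>- eps\<close>.\<close>
lemma barrier_dominates:
  assumes "0 \<le> lam" "lam \<le> 1" "0 \<le> m" "0 < eta"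
    and init: "\<And>x. x \<in> Omega x0 0 \<Longrightarrow> \<bar>eps 0 x\<bar> \<le> m * weight x"
    and "0 \<le> t" "\<bar>x + xstar x0 t\<bar> < pi"
  shows "\<bar>eps t x\<bar> < barrier x0 lam (m + eta) eta t x"
proof (rule ccontr)
  let ?\<Phi> = "barrier x0 lam (m + eta) eta"
  assume "\<not> ?thesis"
  then have "?\<Phi> t x \<le> \<bar>eps t x\<bar>"
    by simp
  then obtain t1 x1 where "0 \<le> t1" and x1: "\<bar>x1 + xstar x0 t1\<bar> < pi"
    and contact: "?\<Phi> t1 x1 \<le> \<bar>eps t1 x1\<bar>"
    and earlier: "\<And>t x. 0 \<le> t \<Longrightarrow> t < t1 \<Longrightarrow> \<bar>x + xstar x0 t\<bar> < pi \<Longrightarrow> \<bar>eps t x\<bar> < ?\<Phi> t x"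
    by (rule first_contact[OF \<open>0 < eta\<close> \<open>0 \<le> t\<close> \<open>\<bar>x + xstar x0 t\<bar> < pi\<close>]) blast
  have "0 < t1"
  proof (rule ccontr)
    assume "\<not> 0 < t1"
    with \<open>0 \<le> t1\<close> have "t1 = 0"
      by simp
    then have "\<bar>eps t1 x1\<bar> \<le> m * weight x1"
      using init x1 by (simp add: mem_Omega_iff)
    moreover have "0 \<le> eta * weight x1" "0 < eta * sec_half (x1 + xstar x0 t1)"
      using sec_half_ge_one[OF x1] weight_nonneg[of x1] \<open>0 < eta\<close> by simp_all
    ultimately show False
      using contact \<open>t1 = 0\<close> by (simp add: barrier_def algebra_simps)
  qed
  have below: "\<bar>eps t1 x\<bar> \<le> ?\<Phi> t1 x" if "\<bar>x + xstar x0 t1\<bar> < pi" for x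
    by (rule below_barrier_until_first_contact(2)[OF \<open>0 < t1\<close> that]) (rule earlier)
  have "\<forall>\<^sub>F s in at_left t1. \<bar>eps s x1\<bar> < ?\<Phi> s x1"
    by (rule below_barrier_until_first_contact(1)[OF \<open>0 < t1\<close> x1]) (rule earlier)
  then have "\<forall>\<^sub>F s in at_left t1. eps s x1 \<le> ?\<Phi> s x1 \<and> - eps s x1 \<le> ?\<Phi> s x1"
    by eventually_elim linarith
  then have "eps t1 x1 < ?\<Phi> t1 x1" and "- eps t1 x1 < ?\<Phi> t1 x1"
    using below assms(3,4) \<open>0 < t1\<close> x1
    by (auto intro!: barrier_not_touched_from_below[OF assms(1,2)]
        linearized_solution.barrier_not_touched_from_below[OF solution_uminus assms(1,2)]
        elim: eventually_mono)
  then show False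
    using contact by linarith
qed

lemma abs_le_decaying_weight:
  assumes "0 \<le> lam" "lam \<le> 1" "0 \<le> m"
    and init: "\<And>x. x \<in> Omega x0 0 \<Longrightarrow> \<bar>eps 0 x\<bar> \<le> m * weight x"
    and "0 \<le> t" "x \<in> Omega x0 t"
  shows "\<bar>eps t x\<bar> \<le> m * exp (- lam * t) * weight x"
proof -
  let ?S = "{- pi - xstar x0 t<..<pi - xstar x0 t}"
  have "\<bar>eps t z\<bar> \<le> m * exp (- lam * t) * weight z" if z: "z \<in> ?S" for z
  proof (rule tendsto_le[OF trivial_limit_at_right_real])
    have "((\<lambda>eta. barrier x0 lam (m + eta) eta t z) \<longlongrightarrow> barrier x0 lam (m + 0) 0 t z) (at_right 0)"
      unfolding barrier_def by (intro tendsto_intros)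
    then show "((\<lambda>eta. barrier x0 lam (m + eta) eta t z) \<longlongrightarrow> m * exp (- lam * t) * weight z)
        (at_right 0)"
      by (simp add: barrier_def)
    show "((\<lambda>_. \<bar>eps t z\<bar>) \<longlongrightarrow> \<bar>eps t z\<bar>) (at_right 0)"
      by (rule tendsto_const)
    have "\<bar>z + xstar x0 t\<bar> < pi"
      using z by auto
    note dominated = barrier_dominates[OF assms(1-3) _ init \<open>0 \<le> t\<close> this]
    show "\<forall>\<^sub>F eta in at_right 0. \<bar>eps t z\<bar> \<le> barrier x0 lam (m + eta) eta t z"
      using eventually_at_right_less[of "0::real"]
      by eventually_elim (auto intro: less_imp_le dominated)
  qed
  moreover have "closure ?S = Omega x0 t"
    by (simp add: Omega_def)
  moreover have "continuous_on (Omega x0 t) (\<lambda>u. m * exp (- lam * t) * weight u - \<bar>eps t u\<bar>)"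
    by (intro continuous_intros continuous_on_weight continuous_on_slice \<open>0 \<le> t\<close>)
  ultimately show ?thesis
    using continuous_ge_on_closure[where f = "\<lambda>u. m * exp (- lam * t) * weight u - \<bar>eps t u\<bar>"
        and a = 0 and S = ?S] assms(6)
    by auto
qed

end

section \<open>Weighted decay\<close>

lemma wnorm_nonneg: "S \<noteq> {} \<Longrightarrow> 0 \<le> wnorm f W S"
  unfolding wnorm_def by (metis SUP_upper2 abs_ge_zero ex_in_conv zero_ereal_def ereal_less_eq(3))

lemma abs_le_wnorm:
  assumes "wnorm f W S = ereal c" "x \<in> S" "0 < W x"
  shows "\<bar>f x\<bar> \<le> c * W x"
proof -
  have "ereal \<bar>f x / W x\<bar> \<le> ereal c"
    unfolding assms(1)[symmetric] wnorm_def using assms(2) by (rule SUP_upper)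
  then show ?thesis
    using assms(3) by (simp add: abs_divide divide_le_eq)
qed

lemma wnorm_le:
  assumes "\<And>x. x \<in> S \<Longrightarrow> \<bar>f x\<bar> \<le> c * W x" "0 \<le> c" "\<And>x. 0 \<le> W x"
  shows "wnorm f W S \<le> ereal c"
  unfolding wnorm_def
proof (rule SUP_least)
  fix x
  assume "x \<in> S"
  then show "ereal \<bar>f x / W x\<bar> \<le> ereal c"
    using assms(1)[of x] assms(2) assms(3)[of x]
    by (cases "W x = 0") (auto simp: abs_divide divide_le_eq)
qed

lemma bigo_continuous_imp_eq_0:
  fixes f g :: "real \<Rightarrow> real"
  assumes "f \<in> O[at x](g)" "(g \<longlongrightarrow> 0) (at x)" "isCont f x"
  shows "f x = 0"
proof -
  obtain c where "\<forall>\<^sub>F y in at x. norm (f y) \<le> c * norm (g y)"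
    using landau_o.bigE[OF assms(1)] by blast
  moreover have "((\<lambda>y. c * norm (g y)) \<longlongrightarrow> 0) (at x)"
    using tendsto_mult_right_zero[OF tendsto_norm_zero[OF assms(2)]] .
  ultimately have "(f \<longlongrightarrow> 0) (at x)"
    by (rule Lim_null_comparison)
  then show ?thesis
    using assms(3) by (simp add: isCont_def LIM_unique)
qed

lemma C3_on_imp_isCont:
  assumes "C3_on S f" "x \<in> interior S"
  shows "isCont f x"
proof -
  obtain f' where "(f has_real_derivative f') (at x within S)"
    using assms interior_subset unfolding C3_on_def by blast
  then show ?thesis
    using at_within_interior[OF assms(2)] by (metis DERIV_isCont)
qed

text \<open>The weight vanishes in \<open>Omega x0 0\<close> only at \<open>0\<close>, where \<open>wnorm\<close> divides by zero;
  there \<open>eps0\<close> vanishes as well.\<close>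
lemma abs_le_wnorm_weight:
  assumes "\<bar>x0\<bar> < 1/10" and C3: "C3_on (Omega x0 0) eps0"
    and bigo: "eps0 \<in> O[at 0](\<lambda>x. \<bar>x\<bar> ^ 3)"
    and norm: "wnorm eps0 weight (Omega x0 0) = ereal m" and x: "x \<in> Omega x0 0"
  shows "\<bar>eps0 x\<bar> \<le> m * weight x"
proof (cases "weight x = 0")
  case True
  have "\<bar>x0\<bar> < pi"
    using assms(1) pi_gt3 by linarith
  then have "\<bar>x + x0\<bar> \<le> pi" "0 \<in> interior (Omega x0 0)"
    using x assms(1) pi_gt3 by (simp_all add: mem_Omega_iff mem_interior_Omega_iff xstar_0)
  have "isCont (\<lambda>x::real. \<bar>x\<bar> ^ 3) 0"
    by (intro continuous_intros)
  then have "eps0 0 = 0"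
    using bigo_continuous_imp_eq_0[OF bigo _ C3_on_imp_isCont[OF C3 \<open>0 \<in> interior _\<close>]]
    unfolding isCont_def by simp
  moreover have "\<bar>x\<bar> < 2 * pi"
    using \<open>\<bar>x + x0\<bar> \<le> pi\<close> assms(1) pi_gt3 by arith
  then have "x = 0"
    by (rule weight_eq_0_imp_eq_0[OF True])
  ultimately show ?thesis
    by simp
next
  case False
  then show ?thesis
    using abs_le_wnorm[OF norm x] weight_nonneg[of x] by simp
qed

lemma weighted_decay:
  assumes "0 \<le> lam" "lam \<le> 1" "\<bar>x0\<bar> < 1/10" "0 \<le> t"
    and C3: "C3_on (Omega x0 0) eps0" and bigo: "eps0 \<in> O[at 0](\<lambda>x. \<bar>x\<bar> ^ 3)"
    and init: "\<forall>x\<in>Omega x0 0. eps 0 x = eps0 x"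
    and "continuous_on {(t, x). 0 \<le> t \<and> x \<in> Omega x0 t} (\<lambda>(t, x). eps t x)"
    and "\<forall>t x. 0 < t \<longrightarrow> x \<in> interior (Omega x0 t) \<longrightarrow>
      (\<exists>et ex. ((\<lambda>s. eps s x) has_real_derivative et) (at t) \<and>
        ((\<lambda>y. eps t y) has_real_derivative ex) (at x) \<and> et = Lop (eps t) ex x)"
  shows "wnorm (eps t) weight (Omega x0 t) \<le> ereal (exp (- lam * t)) * wnorm eps0 weight (Omega x0 0)"
proof -
  interpret linearized_solution x0 eps
    using assms(3,8,9) by unfold_locales blast+
  have "0 \<in> Omega x0 0"
    using assms(3) pi_gt3 by (simp add: mem_Omega_iff xstar_0)
  then have "0 \<le> wnorm eps0 weight (Omega x0 0)"
    by (intro wnorm_nonneg) blast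
  then consider "wnorm eps0 weight (Omega x0 0) = \<infinity>"
    | m where "0 \<le> m" "wnorm eps0 weight (Omega x0 0) = ereal m"
    by (cases "wnorm eps0 weight (Omega x0 0)") auto
  then show ?thesis
  proof cases
    case 1
    have "ereal (exp (- lam * t)) * \<infinity> = \<infinity>"
      by simp
    then show ?thesis
      by (simp add: 1)
  next
    case (2 m)
    then have "\<bar>eps 0 x\<bar> \<le> m * weight x" if "x \<in> Omega x0 0" for x
      using abs_le_wnorm_weight[OF assms(3) C3 bigo 2(2) that] init that by simp
    then have "\<bar>eps t x\<bar> \<le> (m * exp (- lam * t)) * weight x" if "x \<in> Omega x0 t" for x
      using abs_le_decaying_weight[OF assms(1,2) 2(1) _ assms(4) that] by blast
    then have "wnorm (eps t) weight (Omega x0 t) \<le> ereal (m * exp (- lam * t))"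
      using 2(1) by (intro wnorm_le weight_nonneg) auto
    then show ?thesis
      by (simp add: 2(2) mult.commute)
  qed
qed

theorem proposition3p1:
  fixes \<theta> :: real
  assumes "0 < \<theta>" "\<theta> < 1"
  shows "\<exists>\<delta>>0. \<exists>W :: real \<Rightarrow> real.
     (\<forall>x. W x \<ge> 0) \<and> (\<forall>x. W (x + 2 * pi) = W x) \<and> W1inf W \<and>
     W \<in> O[at 0](\<lambda>x. \<bar>x\<bar> ^ 3) \<and>
     (\<forall>x. x \<notin> {2 * pi * of_int k | k. True} \<longrightarrow> W x > 0) \<and>
     (\<forall>x0 \<epsilon>0 (\<epsilon> :: real \<Rightarrow> real \<Rightarrow> real).
        x0 \<in> {-\<delta><..<\<delta>} \<longrightarrow>
        C3_on (Omega x0 0) \<epsilon>0 \<longrightarrow>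
        \<epsilon>0 \<in> O[at 0](\<lambda>x. \<bar>x\<bar> ^ 3) \<longrightarrow>
        (\<forall>x\<in>Omega x0 0. \<epsilon> 0 x = \<epsilon>0 x) \<longrightarrow>
        continuous_on {(t, x). 0 \<le> t \<and> x \<in> Omega x0 t} (\<lambda>(t, x). \<epsilon> t x) \<longrightarrow>
        (\<forall>t x. 0 < t \<longrightarrow> x \<in> interior (Omega x0 t) \<longrightarrow>
           (\<exists>et ex. ((\<lambda>s. \<epsilon> s x) has_real_derivative et) (at t) \<and>
                    ((\<lambda>y. \<epsilon> t y) has_real_derivative ex) (at x) \<and>
                    et = Lop (\<epsilon> t) ex x)) \<longrightarrow>
        (\<forall>t\<ge>0. wnorm (\<epsilon> t) W (Omega x0 t)
                \<le> ereal (exp (- (1 - \<theta>) * t)) * wnorm \<epsilon>0 W (Omega x0 0)))"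
proof (intro exI conjI allI impI)
  show "(0::real) < 1/10"
    by simp
  show "0 \<le> weight x" "weight (x + 2 * pi) = weight x" for x
    by (rule weight_nonneg weight_periodic)+
  show "W1inf weight" "weight \<in> O[at 0](\<lambda>x. \<bar>x\<bar> ^ 3)"
    by (rule W1inf_weight weight_bigo)+
  show "x \<notin> {2 * pi * of_int k | k. True} \<Longrightarrow> 0 < weight x" for x
    by (rule weight_pos)
qed (rule weighted_decay; use assms in auto)

end
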